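(* The function $\nabla=\partial^2$ satisfies $\big[\tfrac98(\nabla')^2+\Lambda(\nabla-1)\big]^2=\nabla(\nabla-1)^2(4\nabla-3)^2$, where $\Lambda=1-2\lambda^2$.
   Context: Let $0<\kappa<1$ and $\lambda=\sqrt{1-\kappa^2}$. Let $F(\tfrac16,\tfrac56;\tfrac12;\cdot)$ denote the Gauss hypergeometric function. Define $u$ as a function of $\phi$ near $0$ by $u=\int_0^{\sin\phi}F(\tfrac16,\tfrac56;\tfrac12;\kappa^2t^2)\,\frac{dt}{\sqrt{1-t^2}}$; near the origin (fixing $0$) this inverts to a holomorphic function $u\mapsto\phi(u)$ with $\phi(0)=0$. Let $\psi$ be the holomorphic function near $0$ with $\psi(0)=0$ and $\sin\psi=\kappa\sin\phi$. Set $\partial=\cos\tfrac23\psi$ and $\nabla=\partial^2$, as functions of $u$ on a small disc about $0$; primes denote $d/du$. *)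

theory Defs
  imports "HOL-Complex_Analysis.Complex_Analysis"
begin

definition hyp2f1 :: "complex \<Rightarrow> complex \<Rightarrow> complex \<Rightarrow> complex \<Rightarrow> complex" where
  "hyp2f1 a b c z =
     (\<Sum>n. (pochhammer a n * pochhammer b n / (pochhammer c n * fact n)) * z ^ n)"

definition u_of_phi :: "real \<Rightarrow> complex \<Rightarrow> complex" where
  "u_of_phi \<kappa> \<phi> =
     contour_integral (linepath 0 (sin \<phi>))
       (\<lambda>t. hyp2f1 (1/6) (5/6) (1/2) ((complex_of_real \<kappa>)\<^sup>2 * t\<^sup>2) / csqrt (1 - t\<^sup>2))"

end

theory Submission
  imports Defs
begin

(* Write F = F(1/6,5/6;1/2;.). From the hypergeometric equation for F, the substitution x = sin^2 z
   shows that y(z) = F(sin^2 z) cos z solves y'' = -(4/9) y with y(0) = 1, y'(0) = 0, so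
   F(sin^2 z) cos z = cos (2z/3) near 0. Differentiating u(phi(u)) = u gives
   phi' F(kappa^2 sin^2 phi) = 1, and differentiating sin psi = kappa sin phi gives
   psi' cos psi = kappa phi' cos phi; since kappa^2 sin^2 phi = sin^2 psi, together they yield
   psi' cos (2 psi/3) = kappa cos phi. With cos (2 psi) = 4 cos^3 (2 psi/3) - 3 cos (2 psi/3) the
   stated equation becomes a polynomial identity near 0, and analytic continuation carries it to
   the whole disc. *)

definition hyp2f1_fps :: "complex \<Rightarrow> complex \<Rightarrow> complex \<Rightarrow> complex fps" where
  "hyp2f1_fps a b c = Abs_fps (\<lambda>n. pochhammer a n * pochhammer b n / (pochhammer c n * fact n))"

lemma hyp2f1_fps_nth_Suc:
  assumes "c \<notin> \<int>\<^sub>\<le>\<^sub>0"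
  shows "fps_nth (hyp2f1_fps a b c) (Suc n) =
           fps_nth (hyp2f1_fps a b c) n * (a + of_nat n) * (b + of_nat n)
             / ((c + of_nat n) * (of_nat n + 1))"
proof -
  have "pochhammer c n \<noteq> 0" "c + of_nat n \<noteq> 0"
    using assms by (auto simp: pochhammer_eq_0_iff dest: plus_of_nat_eq_0_imp)
  then show ?thesis
    by (simp add: hyp2f1_fps_def pochhammer_Suc field_simps flip: of_nat_Suc)
qed

lemma hyp2f1_fps_ode:
  fixes a b c :: complex
  assumes "c \<notin> \<int>\<^sub>\<le>\<^sub>0"
  shows "fps_of_poly [:0, 1, -1:] * fps_deriv (fps_deriv (hyp2f1_fps a b c))
           + fps_of_poly [:c, -(a + b + 1):] * fps_deriv (hyp2f1_fps a b c)
           = fps_const (a * b) * hyp2f1_fps a b c" (is "?lhs = ?rhs")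
proof (rule fps_ext)
  fix n
  define f where "f = fps_nth (hyp2f1_fps a b c)"
  have "(c + of_nat n) * (of_nat n + 1) \<noteq> 0"
    using assms by (auto simp: add.commute dest: plus_of_nat_eq_0_imp simp flip: of_nat_Suc)
  then have rec:
    "(c + of_nat n) * (of_nat n + 1) * f (Suc n) = (a + of_nat n) * (b + of_nat n) * f n"
    unfolding f_def hyp2f1_fps_nth_Suc[OF assms] by simp
  have P1: "fps_of_poly [:0, 1, -1:] = (fps_X - fps_X^2 :: complex fps)"
    by (rule fps_ext) (auto simp: coeff_pCons split: nat.split)
  have P2: "fps_of_poly [:c, -(a + b + 1):] = fps_const c - fps_const (a + b + 1) * fps_X"
    by (rule fps_ext) (simp add: coeff_pCons split: nat.split)
  show "fps_nth ?lhs n = fps_nth ?rhs n"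
    unfolding P1 P2
    using rec
    by (auto simp: algebra_simps fps_X_power_mult_nth not_less Suc_diff_Suc numeral_2_eq_2
             simp flip: f_def)
qed

lemma hyp2f1_eq_eval_fps: "hyp2f1 a b c = eval_fps (hyp2f1_fps a b c)"
  by (simp add: fun_eq_iff hyp2f1_def eval_fps_def hyp2f1_fps_def)

lemma hyp2f1_at_0 [simp]: "hyp2f1 a b c 0 = 1"
  by (simp add: hyp2f1_eq_eval_fps eval_fps_at_0 hyp2f1_fps_def)

lemma holomorphic_on_hyp2f1:
  "hyp2f1 a b c holomorphic_on eball 0 (fps_conv_radius (hyp2f1_fps a b c))"
  unfolding hyp2f1_eq_eval_fps by (rule holomorphic_on_eval_fps) simp

lemma hyp2f1_ode:
  assumes "c \<notin> \<int>\<^sub>\<le>\<^sub>0" and z: "norm z < fps_conv_radius (hyp2f1_fps a b c)"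
  shows "z * (1 - z) * deriv (deriv (hyp2f1 a b c)) z
           + (c - (a + b + 1) * z) * deriv (hyp2f1 a b c) z = a * b * hyp2f1 a b c z"
proof -
  define F where "F = hyp2f1_fps a b c"
  have z1: "norm z < fps_conv_radius (fps_deriv F)"
    using z fps_conv_radius_deriv[of F] unfolding F_def by order
  have z2: "norm z < fps_conv_radius (fps_deriv (fps_deriv F))"
    using z1 fps_conv_radius_deriv[of "fps_deriv F"] by order
  have "\<forall>\<^sub>F y in nhds z. deriv (eval_fps F) y = eval_fps (fps_deriv F) y"
    using eventually_nhds_in_open[OF open_eball, of z 0 "fps_conv_radius F"] z
    by (auto simp: F_def dist_norm elim!: eventually_mono intro: eval_fps_deriv[symmetric])
  then have "deriv (deriv (eval_fps F)) z = eval_fps (fps_deriv (fps_deriv F)) z"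
    using eval_fps_deriv[OF z1] by (simp add: deriv_cong_ev)
  moreover have "deriv (eval_fps F) z = eval_fps (fps_deriv F) z"
    using eval_fps_deriv[of z F] z by (simp add: F_def)
  moreover have "eval_fps (fps_const (a * b) * F) z = a * b * eval_fps F z"
    using z by (simp add: eval_fps_mult F_def)
  ultimately show ?thesis
    using arg_cong[OF hyp2f1_fps_ode[OF assms(1), of a b], of "\<lambda>G. eval_fps G z"] z1 z2
    by (simp add: hyp2f1_eq_eval_fps eval_fps_add eval_fps_mult F_def
          less_le_trans[OF _ fps_conv_radius_mult] algebra_simps)
qed

lemma fps_conv_radius_ge_1_if_bounded:
  fixes f :: "complex fps"
  assumes "\<And>n. norm (fps_nth f n) \<le> C"
  shows "1 \<le> fps_conv_radius f"
  unfolding fps_conv_radius_def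
proof (rule conv_radius_geI_ex')
  fix r :: real
  assume "0 < r" "ereal r < 1"
  then have "summable (\<lambda>n. C * r ^ n)" by simp
  then show "summable (\<lambda>n. fps_nth f n * of_real r ^ n)"
    by (rule summable_comparison_test'[where N = 0])
       (use assms \<open>0 < r\<close> in
         \<open>auto simp: norm_mult norm_power intro: mult_right_mono\<close>)
qed

lemma norm_hyp2f1_fps_nth_le_1:
  fixes a b c :: real
  assumes "0 \<le> a" "0 \<le> b" "0 < c" "a + b \<le> c + 1" "a * b \<le> c"
  shows "norm (fps_nth (hyp2f1_fps a b c) n) \<le> 1"
proof (induction n)
  case 0
  show ?case by (simp add: hyp2f1_fps_def)
next
  case (Suc n)
  define q where "q = (a + n) * (b + n) / ((c + n) * (n + 1))"
  have "(a + b) * n \<le> (c + 1) * n"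
    using assms(4) by (intro mult_right_mono) auto
  then have "(a + n) * (b + n) \<le> (c + n) * (n + 1)"
    using assms(5) by (simp add: algebra_simps)
  then have "0 \<le> q" "q \<le> 1"
    using assms by (auto simp: q_def divide_le_eq_1)
  have "complex_of_real c \<notin> \<int>\<^sub>\<le>\<^sub>0"
    using assms(3) nonpos_Ints_subset_nonpos_Reals by (auto simp: of_real_in_nonpos_Ints_iff)
  then have "fps_nth (hyp2f1_fps a b c) (Suc n) = fps_nth (hyp2f1_fps a b c) n * of_real q"
    by (simp add: hyp2f1_fps_nth_Suc q_def ac_simps)
  with Suc.IH \<open>0 \<le> q\<close> \<open>q \<le> 1\<close> show ?case
    by (simp add: norm_mult mult_le_one)
qed

lemma one_le_fps_conv_radius_hyp2f1_fps_sixths: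
  "1 \<le> fps_conv_radius (hyp2f1_fps (1/6) (5/6) (1/2))"
  using fps_conv_radius_ge_1_if_bounded[OF norm_hyp2f1_fps_nth_le_1[of "1/6" "5/6" "1/2"]] by simp

lemma linear_ode_solution_eq_0:
  fixes f :: "complex \<Rightarrow> complex"
  assumes "convex S" "z0 \<in> S" "f z0 = 0"
    and f: "\<And>z. z \<in> S \<Longrightarrow> (f has_field_derivative c * f z) (at z within S)"
    and "z \<in> S"
  shows "f z = 0"
proof -
  have "((\<lambda>z. f z * exp (- c * z)) has_field_derivative 0) (at z within S)" if "z \<in> S" for z
    using f[OF that] by (auto intro!: derivative_eq_intros simp: algebra_simps)
  then obtain k where "\<forall>z\<in>S. f z * exp (- c * z) = k"
    using has_field_derivative_zero_constant[OF assms(1)] by blast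
  then have "f z * exp (- c * z) = f z0 * exp (- c * z0)"
    using assms(2,5) by simp
  with assms(3) show ?thesis by simp
qed

lemma second_order_linear_ode_solution_eq_0:
  fixes f f' :: "complex \<Rightarrow> complex"
  assumes "convex S" "z0 \<in> S" "f z0 = 0" "f' z0 = 0"
    and f: "\<And>z. z \<in> S \<Longrightarrow> (f has_field_derivative f' z) (at z within S)"
    and f': "\<And>z. z \<in> S \<Longrightarrow> (f' has_field_derivative m * f z) (at z within S)"
    and "z \<in> S"
  shows "f z = 0"
proof -
  \<comment> \<open>\<open>f' - k * f\<close> with \<open>k\<^sup>2 = m\<close> solves a first-order equation, and then so does \<open>f\<close>\<close>
  define k where "k = csqrt m"
  have "f' z = k * f z" if "z \<in> S" for z
  proof -
    have "f' z - k * f z = 0"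
    proof (rule linear_ode_solution_eq_0[OF assms(1,2),
                where f = "\<lambda>z. f' z - k * f z" and c = "- k"])
      fix z assume "z \<in> S"
      then have "((\<lambda>z. f' z - k * f z) has_field_derivative m * f z - k * f' z) (at z within S)"
        using f f' by (auto intro!: derivative_eq_intros)
      also have "m * f z - k * f' z = - k * (f' z - k * f z)"
        by (simp add: k_def algebra_simps flip: power2_eq_square)
      finally show "((\<lambda>z. f' z - k * f z) has_field_derivative - k * (f' z - k * f z))
                      (at z within S)" .
    qed (use assms(3,4) that in auto)
    then show ?thesis by simp
  qed
  with f have "(f has_field_derivative k * f z) (at z within S)" if "z \<in> S" for z
    using that by metis
  then show ?thesis
    using linear_ode_solution_eq_0[where f = f and c = k] assms(1-3,7) by blast
qed

lemma hypergeometric_sin_squared_substitution: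
  fixes g g' g'' :: "complex \<Rightarrow> complex" and a z :: complex
  assumes g: "(g has_field_derivative g' (sin z ^ 2)) (at (sin z ^ 2))"
    and g': "(g' has_field_derivative g'' (sin z ^ 2)) (at (sin z ^ 2))"
    and ode: "sin z ^ 2 * (1 - sin z ^ 2) * g'' (sin z ^ 2) + (1/2 - 2 * sin z ^ 2) * g' (sin z ^ 2)
                = a * (1 - a) * g (sin z ^ 2)"
  shows "((\<lambda>z. g (sin z ^ 2) * cos z) has_field_derivative
            2 * sin z * cos z ^ 2 * g' (sin z ^ 2) - sin z * g (sin z ^ 2)) (at z)"
    and "((\<lambda>z. 2 * sin z * cos z ^ 2 * g' (sin z ^ 2) - sin z * g (sin z ^ 2)) has_field_derivative
            - ((1 - 2 * a) ^ 2) * (g (sin z ^ 2) * cos z)) (at z)"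
proof -
  have sin2: "((\<lambda>z. sin z ^ 2) has_field_derivative 2 * sin z * cos z) (at z)"
    by (auto intro!: derivative_eq_intros)
  note G = DERIV_chain2[OF g sin2] and G' = DERIV_chain2[OF g' sin2]
  show "((\<lambda>z. g (sin z ^ 2) * cos z) has_field_derivative
            2 * sin z * cos z ^ 2 * g' (sin z ^ 2) - sin z * g (sin z ^ 2)) (at z)"
    by (rule DERIV_cong[OF DERIV_mult'[OF G DERIV_cos]]) (simp add: algebra_simps power2_eq_square)
  have sc: "((\<lambda>z. 2 * sin z * cos z ^ 2) has_field_derivative
               2 * cos z ^ 3 - 4 * sin z ^ 2 * cos z) (at z)"
    by (auto intro!: derivative_eq_intros simp: algebra_simps power2_eq_square power3_eq_cube)
  have pythagoras: "sin z ^ 2 + cos z ^ 2 = 1" by simp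
  show "((\<lambda>z. 2 * sin z * cos z ^ 2 * g' (sin z ^ 2) - sin z * g (sin z ^ 2)) has_field_derivative
            - ((1 - 2 * a) ^ 2) * (g (sin z ^ 2) * cos z)) (at z)"
    by (rule DERIV_cong[OF DERIV_diff[OF DERIV_mult'[OF sc G'] DERIV_mult'[OF DERIV_sin G]]])
       (use ode pythagoras in algebra)
qed

lemma one_half_notin_nonpos_Ints: "(1/2 :: complex) \<notin> \<int>\<^sub>\<le>\<^sub>0"
  using nonpos_Ints_subset_nonpos_Reals by (auto simp: complex_nonpos_Reals_iff)

lemma hyp2f1_sin_squared_mult_cos_derivatives:
  fixes a z :: complex
  assumes "norm (sin z ^ 2) < fps_conv_radius (hyp2f1_fps a (1 - a) (1/2))"
  defines "f \<equiv> hyp2f1 a (1 - a) (1/2)"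
  shows "((\<lambda>z. f (sin z ^ 2) * cos z) has_field_derivative
            2 * sin z * cos z ^ 2 * deriv f (sin z ^ 2) - sin z * f (sin z ^ 2)) (at z)"
      (is ?first)
    and "((\<lambda>z. 2 * sin z * cos z ^ 2 * deriv f (sin z ^ 2) - sin z * f (sin z ^ 2))
            has_field_derivative - ((1 - 2 * a) ^ 2) * (f (sin z ^ 2) * cos z)) (at z)"
      (is ?second)
proof -
  define D where "D = eball (0::complex) (fps_conv_radius (hyp2f1_fps a (1 - a) (1/2)))"
  have D: "open D" "sin z ^ 2 \<in> D"
    using assms(1) by (simp_all add: D_def)
  have "f holomorphic_on D" "deriv f holomorphic_on D"
    using holomorphic_on_hyp2f1 holomorphic_deriv by (auto simp: f_def D_def)
  note derivatives = holomorphic_derivI[OF this(1) D] holomorphic_derivI[OF this(2) D]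
  have "sin z ^ 2 * (1 - sin z ^ 2) * deriv (deriv f) (sin z ^ 2)
          + (1/2 - 2 * sin z ^ 2) * deriv f (sin z ^ 2) = a * (1 - a) * f (sin z ^ 2)"
    using hyp2f1_ode[OF one_half_notin_nonpos_Ints assms(1)] by (simp add: f_def)
  with derivatives show ?first and ?second
    by (rule hypergeometric_sin_squared_substitution)+
qed

lemma hyp2f1_sin_squared_mult_cos:
  fixes a :: complex
  assumes "0 < fps_conv_radius (hyp2f1_fps a (1 - a) (1/2))"
  shows "\<forall>\<^sub>F z in nhds 0. hyp2f1 a (1 - a) (1/2) (sin z ^ 2) * cos z = cos ((1 - 2 * a) * z)"
proof -
  define f where "f = hyp2f1 a (1 - a) (1/2)"
  define V where
    "V = (\<lambda>z::complex. sin z ^ 2) -` eball 0 (fps_conv_radius (hyp2f1_fps a (1 - a) (1/2)))"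
  have "open V" "0 \<in> V"
    using assms unfolding V_def
    by (intro continuous_open_vimage open_eball continuous_intros, simp_all add: zero_ereal_def)
  then obtain d where "0 < d" and dV: "ball 0 d \<subseteq> V"
    using open_contains_ball by blast
  have d: "norm (sin z ^ 2) < fps_conv_radius (hyp2f1_fps a (1 - a) (1/2))"
    if "z \<in> ball 0 d" for z :: complex
    using subsetD[OF dV that] by (simp add: V_def)
  define w where "w z = f (sin z ^ 2) * cos z - cos ((1 - 2 * a) * z)" for z
  define w' where "w' z = 2 * sin z * cos z ^ 2 * deriv f (sin z ^ 2) - sin z * f (sin z ^ 2)
                            + (1 - 2 * a) * sin ((1 - 2 * a) * z)" for z
  have w: "(w has_field_derivative w' z) (at z within ball 0 d)"
    and w': "(w' has_field_derivative - ((1 - 2 * a) ^ 2) * w z) (at z within ball 0 d)"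
    if "z \<in> ball 0 d" for z
  proof -
    note hyp = hyp2f1_sin_squared_mult_cos_derivatives[OF d[OF that], folded f_def]
    have cos: "((\<lambda>z. cos ((1 - 2 * a) * z)) has_field_derivative
                 - (1 - 2 * a) * sin ((1 - 2 * a) * z)) (at z)"
      and sin: "((\<lambda>z. (1 - 2 * a) * sin ((1 - 2 * a) * z)) has_field_derivative
                  (1 - 2 * a) ^ 2 * cos ((1 - 2 * a) * z)) (at z)"
      by (auto intro!: derivative_eq_intros simp: power2_eq_square algebra_simps)
    show "(w has_field_derivative w' z) (at z within ball 0 d)"
      unfolding w_def w'_def
      by (rule has_field_derivative_at_within, rule DERIV_cong[OF DERIV_diff[OF hyp(1) cos]])
         (simp add: algebra_simps)
    show "(w' has_field_derivative - ((1 - 2 * a) ^ 2) * w z) (at z within ball 0 d)"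
      unfolding w_def w'_def
      by (rule has_field_derivative_at_within, rule DERIV_cong[OF DERIV_add[OF hyp(2) sin]])
         (simp add: algebra_simps)
  qed
  have "w z = 0" if "z \<in> ball 0 d" for z
    using second_order_linear_ode_solution_eq_0[of "ball 0 d" 0 w w', OF convex_ball _ _ _ w w' that]
      \<open>0 < d\<close> by (simp add: w_def w'_def f_def)
  then show ?thesis
    using \<open>0 < d\<close> by (auto simp: eventually_nhds w_def f_def intro!: exI[of _ "ball 0 d"])
qed

lemma one_minus_square_notin_nonpos_Reals:
  fixes t :: complex
  assumes "norm t < 1"
  shows "1 - t ^ 2 \<notin> \<real>\<^sub>\<le>\<^sub>0"
proof
  assume "1 - t ^ 2 \<in> \<real>\<^sub>\<le>\<^sub>0"
  then have "1 \<le> Re (t ^ 2)" by (simp add: complex_nonpos_Reals_iff)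
  also have "Re (t ^ 2) \<le> norm t ^ 2"
    using complex_Re_le_cmod[of "t ^ 2"] by (simp add: norm_power)
  also have "norm t ^ 2 < 1"
    using assms by (simp add: abs_square_less_1)
  finally show False by simp
qed

lemma has_field_derivative_contour_integral_linepath_sin:
  fixes g :: "complex \<Rightarrow> complex"
  assumes g: "g holomorphic_on ball 0 1" and "norm (sin \<phi>) < 1" "0 < Re (cos \<phi>)"
  shows "((\<lambda>\<phi>. contour_integral (linepath 0 (sin \<phi>)) (\<lambda>t. g t / csqrt (1 - t ^ 2)))
           has_field_derivative g (sin \<phi>)) (at \<phi>)"
proof -
  define I where "I t = g t / csqrt (1 - t ^ 2)" for t
  have "I holomorphic_on ball 0 1"
    unfolding I_def
    by (intro holomorphic_intros g)
       (auto simp: one_minus_square_notin_nonpos_Reals dest: one_minus_square_notin_nonpos_Reals)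
  then obtain P
    where P: "\<And>t. t \<in> ball 0 1 \<Longrightarrow> (P has_field_derivative I t) (at t within ball 0 1)"
    using holomorphic_convex_primitive'[of "ball 0 1" I] by auto
  define V where "V = {z :: complex. norm (sin z) < 1}"
  have V: "open V" "\<phi> \<in> V"
    using assms(2) by (auto simp: V_def intro!: open_Collect_less continuous_intros)
  have "contour_integral (linepath 0 (sin \<psi>)) I = P (sin \<psi>) - P 0" if "\<psi> \<in> V" for \<psi>
    using contour_integral_primitive[OF P, of "linepath 0 (sin \<psi>)"] that
    by (auto simp: V_def closed_segment_subset contour_integral_unique)
  moreover have
    "((\<lambda>\<phi>. P (sin \<phi>) - P 0) has_field_derivative I (sin \<phi>) * cos \<phi>) (at \<phi>)"
    using P[of "sin \<phi>"] V(2) at_within_open[of "sin \<phi>" "ball 0 1"]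
    by (auto simp: V_def intro!: derivative_eq_intros DERIV_chain2[where f = P])
  \<comment> \<open>\<open>0 < Re (cos \<phi>)\<close> makes the principal root \<open>csqrt (1 - sin \<phi> ^ 2)\<close> equal \<open>cos \<phi>\<close>\<close>
  moreover have "I (sin \<phi>) * cos \<phi> = g (sin \<phi>)"
    using assms(3) csqrt_square[of "cos \<phi>"] by (auto simp: I_def cos_squared_eq[symmetric])
  ultimately show ?thesis
    unfolding I_def[symmetric]
    by (metis (no_types, lifting) has_field_derivative_transform_within_open V)
qed

lemma u_of_phi_has_field_derivative:
  assumes "\<bar>\<kappa>\<bar> \<le> 1" "norm (sin \<phi>) < 1" "0 < Re (cos \<phi>)"
  shows "(u_of_phi \<kappa> has_field_derivative
            hyp2f1 (1/6) (5/6) (1/2) (of_real \<kappa> ^ 2 * sin \<phi> ^ 2)) (at \<phi>)"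
proof -
  have "norm (of_real \<kappa> ^ 2 * t ^ 2) < 1" if "norm t < 1" for t :: complex
  proof -
    have "norm (of_real \<kappa> ^ 2 * t ^ 2) = \<kappa> ^ 2 * norm t ^ 2"
      by (simp add: norm_mult norm_power)
    also have "\<dots> \<le> norm t ^ 2"
      using assms(1) by (intro mult_left_le_one_le) (auto simp: abs_square_le_1)
    also have "\<dots> < 1"
      using that by (simp add: abs_square_less_1)
    finally show ?thesis .
  qed
  moreover have "ball 0 1 \<subseteq> eball (0::complex) (fps_conv_radius (hyp2f1_fps (1/6) (5/6) (1/2)))"
    by (metis one_le_fps_conv_radius_hyp2f1_fps_sixths eball_ereal eball_mono one_ereal_def)
  ultimately have "(\<lambda>t. hyp2f1 (1/6) (5/6) (1/2) (of_real \<kappa> ^ 2 * t ^ 2)) holomorphic_on ball 0 1"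
    by (intro holomorphic_on_compose_gen[OF _ holomorphic_on_hyp2f1, unfolded o_def])
       (auto intro!: holomorphic_intros)
  from has_field_derivative_contour_integral_linepath_sin[OF this assms(2,3)] show ?thesis
    by (simp add: u_of_phi_def [abs_def])
qed


lemma cos_two_thirds_squared_identity:
  fixes \<phi> \<psi> q \<kappa> :: complex
  assumes "sin \<psi> = \<kappa> * sin \<phi>" "cos (2/3 * \<psi>) * q = \<kappa> * cos \<phi>"
  shows "((9/8) * (- 4/3 * cos (2/3 * \<psi>) * sin (2/3 * \<psi>) * q) ^ 2
            + (2 * \<kappa> ^ 2 - 1) * (cos (2/3 * \<psi>) ^ 2 - 1)) ^ 2
         = cos (2/3 * \<psi>) ^ 2 * (cos (2/3 * \<psi>) ^ 2 - 1) ^ 2 * (4 * cos (2/3 * \<psi>) ^ 2 - 3) ^ 2"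
proof -
  have "1 - 2 * sin \<psi> ^ 2 = 4 * cos (2/3 * \<psi>) ^ 3 - 3 * cos (2/3 * \<psi>)"
    using cos_treble_cos[of "2/3 * \<psi>"] cos_double_sin[of \<psi>] by simp
  with assms sin_cos_squared_add[of \<phi>] sin_cos_squared_add[of "2/3 * \<psi>"] show ?thesis
    by algebra
qed

lemma holomorphic_on_imp_tendsto_nhds:
  assumes "f holomorphic_on S" "open S" "z \<in> S"
  shows "(f \<longlongrightarrow> f z) (nhds z)"
  using assms holomorphic_on_imp_continuous_on continuous_on_eq_continuous_at
  by (metis isCont_def tendsto_at_iff_tendsto_nhds)

lemma analytic_continuation_eventually:
  assumes "f holomorphic_on S" "g holomorphic_on S" "open S" "connected S" "z0 \<in> S"
    and "\<forall>\<^sub>F z in nhds z0. f z = g z" and "z \<in> S"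
  shows "f z = g z"
proof -
  obtain B where "open B" "z0 \<in> B" "\<forall>z\<in>B. f z = g z"
    using assms(6) unfolding eventually_nhds by blast
  then show ?thesis
    using analytic_continuation_open[of "B \<inter> S" S f g z] assms by auto
qed

lemma nabla_identity_at:
  fixes \<kappa> :: real and \<phi> \<psi> :: "complex \<Rightarrow> complex"
  assumes "\<bar>\<kappa>\<bar> \<le> 1" "open S" "u \<in> S" "\<phi> holomorphic_on S" "\<psi> holomorphic_on S"
    and inverse: "\<And>v. v \<in> S \<Longrightarrow> u_of_phi \<kappa> (\<phi> v) = v"
    and sin: "\<And>v. v \<in> S \<Longrightarrow> sin (\<psi> v) = of_real \<kappa> * sin (\<phi> v)"
    and \<phi>u: "norm (sin (\<phi> u)) < 1" "0 < Re (cos (\<phi> u))"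
    and closed_form: "hyp2f1 (1/6) (5/6) (1/2) (sin (\<psi> u) ^ 2) * cos (\<psi> u) = cos (2/3 * \<psi> u)"
  shows "((9/8) * (deriv (\<lambda>v. cos (2/3 * \<psi> v) ^ 2) u) ^ 2
            + (2 * of_real \<kappa> ^ 2 - 1) * (cos (2/3 * \<psi> u) ^ 2 - 1)) ^ 2
         = cos (2/3 * \<psi> u) ^ 2 * (cos (2/3 * \<psi> u) ^ 2 - 1) ^ 2 * (4 * cos (2/3 * \<psi> u) ^ 2 - 3) ^ 2"
proof -
  define A where "A = hyp2f1 (1/6) (5/6) (1/2) (of_real \<kappa> ^ 2 * sin (\<phi> u) ^ 2)"
  have \<phi>': "(\<phi> has_field_derivative deriv \<phi> u) (at u)"
    and \<psi>': "(\<psi> has_field_derivative deriv \<psi> u) (at u)"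
    using assms(2-5) by (auto intro: holomorphic_derivI)
  have "((\<lambda>v. u_of_phi \<kappa> (\<phi> v)) has_field_derivative A * deriv \<phi> u) (at u)"
    unfolding A_def by (rule DERIV_chain2[OF u_of_phi_has_field_derivative[OF assms(1) \<phi>u] \<phi>'])
  moreover have "((\<lambda>v. u_of_phi \<kappa> (\<phi> v)) has_field_derivative 1) (at u)"
    by (rule has_field_derivative_transform_within_open[OF DERIV_ident assms(2,3)]) (simp add: inverse)
  ultimately have A\<phi>': "A * deriv \<phi> u = 1"
    by (rule DERIV_unique)
  have "((\<lambda>v. sin (\<psi> v)) has_field_derivative of_real \<kappa> * (cos (\<phi> u) * deriv \<phi> u)) (at u)"
    by (rule has_field_derivative_transform_within_open[OF _ assms(2,3)])
       (auto intro!: derivative_eq_intros \<phi>' simp: sin)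
  then have sin': "cos (\<psi> u) * deriv \<psi> u = of_real \<kappa> * (cos (\<phi> u) * deriv \<phi> u)"
    using DERIV_unique DERIV_chain2[OF DERIV_sin \<psi>'] by blast
  have "A * cos (\<psi> u) = cos (2/3 * \<psi> u)"
    using closed_form by (simp add: A_def sin[OF assms(3)] power_mult_distrib)
  then have "cos (2/3 * \<psi> u) * deriv \<psi> u = of_real \<kappa> * cos (\<phi> u)"
    using A\<phi>' sin' by (metis mult.assoc mult.commute mult.left_neutral)
  moreover have "deriv (\<lambda>v. cos (2/3 * \<psi> v) ^ 2) u
                   = - 4/3 * cos (2/3 * \<psi> u) * sin (2/3 * \<psi> u) * deriv \<psi> u"
    by (rule DERIV_imp_deriv) (auto intro!: derivative_eq_intros \<psi>' simp: algebra_simps)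
  ultimately show ?thesis
    using cos_two_thirds_squared_identity[OF sin[OF assms(3)]] by simp
qed


lemma nabla_identity_near_0:
  fixes \<kappa> :: real and \<phi> \<psi> :: "complex \<Rightarrow> complex"
  assumes "\<bar>\<kappa>\<bar> \<le> 1" "open S" "0 \<in> S" "\<phi> holomorphic_on S" "\<psi> holomorphic_on S"
    and "\<phi> 0 = 0" "\<psi> 0 = 0"
    and "\<And>u. u \<in> S \<Longrightarrow> u_of_phi \<kappa> (\<phi> u) = u"
    and "\<And>u. u \<in> S \<Longrightarrow> sin (\<psi> u) = of_real \<kappa> * sin (\<phi> u)"
  shows "\<forall>\<^sub>F u in nhds 0.
           ((9/8) * (deriv (\<lambda>v. cos (2/3 * \<psi> v) ^ 2) u) ^ 2
              + (2 * of_real \<kappa> ^ 2 - 1) * (cos (2/3 * \<psi> u) ^ 2 - 1)) ^ 2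
           = cos (2/3 * \<psi> u) ^ 2 * (cos (2/3 * \<psi> u) ^ 2 - 1) ^ 2 * (4 * cos (2/3 * \<psi> u) ^ 2 - 3) ^ 2"
proof -
  have "0 < fps_conv_radius (hyp2f1_fps (1/6) (5/6) (1/2))"
    by (rule less_le_trans[OF _ one_le_fps_conv_radius_hyp2f1_fps_sixths]) simp
  then have "\<forall>\<^sub>F z in nhds 0. hyp2f1 (1/6) (5/6) (1/2) (sin z ^ 2) * cos z = cos (2/3 * z)"
    using hyp2f1_sin_squared_mult_cos[of "1/6"] by simp
  then have "\<forall>\<^sub>F u in nhds 0.
               hyp2f1 (1/6) (5/6) (1/2) (sin (\<psi> u) ^ 2) * cos (\<psi> u) = cos (2/3 * \<psi> u)"
    using eventually_compose_filterlim holomorphic_on_imp_tendsto_nhds[OF assms(5,2,3)] assms(7)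
    by fastforce
  moreover have "\<forall>\<^sub>F z in nhds 0. z \<in> {z. norm (sin z) < 1 \<and> 0 < Re (cos z)}"
    by (intro eventually_nhds_in_open open_Collect_conj open_Collect_less continuous_intros) auto
  then have "\<forall>\<^sub>F u in nhds 0. norm (sin (\<phi> u)) < 1 \<and> 0 < Re (cos (\<phi> u))"
    using eventually_compose_filterlim holomorphic_on_imp_tendsto_nhds[OF assms(4,2,3)] assms(6)
    by fastforce
  moreover have "\<forall>\<^sub>F u in nhds 0. u \<in> S"
    by (rule eventually_nhds_in_open[OF assms(2,3)])
  ultimately show ?thesis
    by eventually_elim (use nabla_identity_at[OF assms(1,2) _ assms(4,5,8,9)] in blast)
qed

theorem theorem8:
  fixes \<kappa> r :: real and \<phi> \<psi> :: "complex \<Rightarrow> complex"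
  assumes "0 < \<kappa>" and "\<kappa> < 1" and "0 < r"
    and "\<phi> holomorphic_on ball 0 r" and "\<phi> 0 = 0"
    and "\<And>u. u \<in> ball 0 r \<Longrightarrow> u_of_phi \<kappa> (\<phi> u) = u"
    and "\<psi> holomorphic_on ball 0 r" and "\<psi> 0 = 0"
    and "\<And>u. u \<in> ball 0 r \<Longrightarrow> sin (\<psi> u) = complex_of_real \<kappa> * sin (\<phi> u)"
  shows "let lam = sqrt (1 - \<kappa>\<^sup>2); \<Lambda> = complex_of_real (1 - 2 * lam\<^sup>2);
             nabla = (\<lambda>u. (cos (2/3 * \<psi> u))\<^sup>2)
         in \<forall>u \<in> ball 0 r.
              ((9/8) * (deriv nabla u)\<^sup>2 + \<Lambda> * (nabla u - 1))\<^sup>2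
              = nabla u * (nabla u - 1)\<^sup>2 * (4 * nabla u - 3)\<^sup>2"
proof -
  have \<kappa>: "\<bar>\<kappa>\<bar> \<le> 1"
    using assms(1,2) by simp
  have \<Lambda>: "complex_of_real (1 - 2 * (sqrt (1 - \<kappa>\<^sup>2))\<^sup>2) = 2 * of_real \<kappa> ^ 2 - 1"
    using \<kappa> by (simp add: abs_square_le_1)
  define nabla where "nabla = (\<lambda>u. (cos (2/3 * \<psi> u))\<^sup>2)"
  have hol: "nabla holomorphic_on ball 0 r"
    unfolding nabla_def by (intro holomorphic_intros assms(7))
  have "((9/8) * (deriv nabla u)\<^sup>2 + (2 * of_real \<kappa> ^ 2 - 1) * (nabla u - 1))\<^sup>2
          = nabla u * (nabla u - 1)\<^sup>2 * (4 * nabla u - 3)\<^sup>2" if "u \<in> ball 0 r" for u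
  proof (rule analytic_continuation_eventually[OF _ _ open_ball connected_ball _ _ that])
    show "\<forall>\<^sub>F u in nhds 0.
            ((9/8) * (deriv nabla u)\<^sup>2 + (2 * of_real \<kappa> ^ 2 - 1) * (nabla u - 1))\<^sup>2
              = nabla u * (nabla u - 1)\<^sup>2 * (4 * nabla u - 3)\<^sup>2"
      using nabla_identity_near_0[OF \<kappa> open_ball _ assms(4,7,5,8,6,9)] assms(3)
      by (simp add: nabla_def)
  qed (use assms(3) hol holomorphic_deriv[OF hol] in \<open>auto intro!: holomorphic_intros\<close>)
  then show ?thesis
    unfolding Let_def \<Lambda> by (simp add: nabla_def)
qed

end
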